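(* Let $f \ge 1$ and $n \ge 5f+1$. Consider $n$ robots on the real line operating in the CORDA model under a fully asynchronous scheduler, at most $f$ of which are Byzantine. If every correct robot executes the convergence algorithm described in the context, then the correct robots achieve Byzantine convergence: for every $\epsilon > 0$ there is a time $t_\epsilon$ such that for all $t > t_\epsilon$ and all correct robots $i,j$, $|U_i(t) - U_j(t)| < \epsilon$, where $U_i(t)$ is the position of robot $i$ at time $t$.
   Context: Model: $n$ robots are located on the real line. At most $f$ of them are Byzantine: they may behave arbitrarily, and an adversary chooses their positions at all times. The remaining $m \ge n-f$ robots are correct. Robots are anonymous, meaning they all run the same deterministic program. They are oblivious, with no memory between cycles. They share no common orientation: each robot observes positions in its own coordinate system. They have unlimited visibility and strong multiplicity detection, so an observation returns the full multiset of all $n$ positions. Each correct robot repeatedly executes Look–Compute–Move cycles: - Look: take a snapshot of all positions. - Compute: compute a destination from the snapshot. - Move: move toward the destination. The adversary may stop robot $i$ before it reaches the destination, but only after it has travelled at least a fixed distance $\delta_i>0$ toward it (or has reached it). In the CORDA model, phases of different robots may interleave arbitrarily, so a robot may compute and move based on an outdated snapshot. A fully asynchronous scheduler only guarantees that every robot is activated infinitely often. Algorithm: let robot $i$'s snapshot at time $t$ be sorted as $P_1(t) \le \dots \le P_n(t)$, and let $x_i$ be robot $i$'s own position. - Robot $i$ is elected iff $x_i \le P_{f+1}(t)$ or $x_i \ge P_{n-f}(t)$. - $trim^i_{2f}(P(t))$ is the multiset obtained from $P(t)$ by removing, among the $2f$ smallest positions, those strictly smaller than $x_i$, and, among the $2f$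 largest positions, those strictly larger than $x_i$. Thus its minimum is $\min(x_i, P_{2f+1}(t))$ and its maximum is $\max(x_i, P_{n-2f}(t))$. - $center(S)$ is the midpoint $(\min S + \max S)/2$. - If elected, robot $i$ moves toward $center(trim^i_{2f}(P(t)))$; otherwise it does not move. *)

theory Defs
  imports Complex_Main "HOL-Library.Multiset"
begin

text \<open>Positions of all robots: U j t is the position of robot j (j < n) at time t,
  expressed in a fixed global coordinate system.\<close>

text \<open>Snapshot taken at time t, sorted: P_1 <= ... <= P_n, i.e. element k-1 of the list is P_k.\<close>
definition snapshot :: "nat \<Rightarrow> (nat \<Rightarrow> real \<Rightarrow> real) \<Rightarrow> real \<Rightarrow> real list" where
  "snapshot n U t = sort (map (\<lambda>j. U j t) [0..<n])"

text \<open>Robot at position x is elected iff x <= P_{f+1} or x >= P_{n-f}.\<close>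
definition elected :: "nat \<Rightarrow> nat \<Rightarrow> real list \<Rightarrow> real \<Rightarrow> bool" where
  "elected n f P x \<longleftrightarrow> x \<le> P ! f \<or> x \<ge> P ! (n - f - 1)"

definition trim2f :: "nat \<Rightarrow> nat \<Rightarrow> real list \<Rightarrow> real \<Rightarrow> real multiset" where
  "trim2f n f P x =
     mset P - mset (filter (\<lambda>y. y < x) (take (2 * f) P))
            - mset (filter (\<lambda>y. y > x) (drop (n - 2 * f) P))"

definition center :: "real multiset \<Rightarrow> real" where
  "center S = (Min (set_mset S) + Max (set_mset S)) / 2"

definition destination :: "nat \<Rightarrow> nat \<Rightarrow> real list \<Rightarrow> real \<Rightarrow> real" where
  "destination n f P x = (if elected n f P x then center (trim2f n f P x) else x)"

definition between :: "real \<Rightarrow> real \<Rightarrow> real \<Rightarrow> bool" where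
  "between a b y \<longleftrightarrow> min a b \<le> y \<and> y \<le> max a b"

text \<open>Robot i is correct and executes the algorithm in the CORDA model under a fully
  asynchronous scheduler: its k-th cycle has Look at time tL k, and its Move phase occupies
  the interval [tMs k, tMe k]; outside Move phases the robot does not move; during a
  Move phase it moves continuously and monotonically from its position at Look time towards
  the destination computed from the (possibly outdated) snapshot taken at Look time, and it is
  stopped only after travelling at least delta or reaching the destination. Every robot is
  activated infinitely often (Look times are unbounded).\<close>
definition correct_robot ::
  "nat \<Rightarrow> nat \<Rightarrow> (nat \<Rightarrow> real \<Rightarrow> real) \<Rightarrow> nat \<Rightarrow> real
     \<Rightarrow> (nat \<Rightarrow> real) \<Rightarrow> (nat \<Rightarrow> real) \<Rightarrow> (nat \<Rightarrow> real) \<Rightarrow> bool" where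
  "correct_robot n f U i \<delta> tL tMs tMe \<longleftrightarrow>
     \<delta> > 0 \<and>
     0 \<le> tL 0 \<and>
     (\<forall>k. tL k \<le> tMs k \<and> tMs k \<le> tMe k \<and> tMe k \<le> tL (Suc k)) \<and>
     filterlim tL at_top sequentially \<and>
     (\<forall>t\<in>{0..tMs 0}. U i t = U i 0) \<and>
     (\<forall>k. \<forall>t\<in>{tMe k..tMs (Suc k)}. U i t = U i (tMe k)) \<and>
     (\<forall>k. let p = U i (tL k);
              d = destination n f (snapshot n U (tL k)) p
          in continuous_on {tMs k..tMe k} (U i) \<and>
             (\<forall>s s'. tMs k \<le> s \<and> s \<le> s' \<and> s' \<le> tMe k \<longrightarrow> between (U i s) d (U i s')) \<and>
             \<bar>U i (tMe k) - p\<bar> \<ge> min \<delta> \<bar>d - p\<bar>)"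

end

theory Submission
  imports Defs
begin

text \<open>
  If a correct robot moves up, at least |C| - f correct robots are at or above it, and its
  target is at most the midpoint between it and the largest correct position; symmetrically
  for moves down. Let A be the limit superior of the largest correct position and a the
  limit inferior of the smallest one, and suppose a < A. Close to A, correct robots can only
  stay put or drop by a definite amount, so at arbitrarily late times |C| - 2f correct robots
  are near A, and likewise near a. As |C| > 4f, some robot belongs to both groups, hence
  descends across the gap; in doing so it moves down from below the middle of the gap, at a
  time when |C| - f correct robots are below it. These robots are trapped below the middle
  forever, contradicting that |C| - 2f correct robots return near A, since |C| > 3f.
\<close>

section \<open>Sorted lists and counting\<close>

lemma sorted_nth_le_iff_card:
  fixes xs :: "'a::linorder list"
  assumes "sorted xs" "q < length xs"
  shows "xs ! q \<le> z \<longleftrightarrow> Suc q \<le> card {i. i < length xs \<and> xs ! i \<le> z}"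
proof
  assume "xs ! q \<le> z"
  then have "{..q} \<subseteq> {i. i < length xs \<and> xs ! i \<le> z}"
    using assms sorted_nth_mono[OF assms(1)] by (auto intro: order_trans)
  from card_mono[OF _ this] show "Suc q \<le> card {i. i < length xs \<and> xs ! i \<le> z}" by simp
next
  assume card: "Suc q \<le> card {i. i < length xs \<and> xs ! i \<le> z}"
  show "xs ! q \<le> z"
  proof (rule ccontr)
    assume "\<not> xs ! q \<le> z"
    then have "{i. i < length xs \<and> xs ! i \<le> z} \<subseteq> {..<q}"
      using sorted_nth_mono[OF assms(1), of q] by (auto simp: not_less) (meson order.trans not_le)
    from card_mono[OF _ this] card show False by simp
  qed
qed

lemma sorted_nth_ge_iff_card:
  fixes xs :: "'a::linorder list"
  assumes "sorted xs" "q < length xs"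
  shows "z \<le> xs ! q \<longleftrightarrow> length xs - q \<le> card {i. i < length xs \<and> z \<le> xs ! i}"
proof
  assume "z \<le> xs ! q"
  then have "{q..<length xs} \<subseteq> {i. i < length xs \<and> z \<le> xs ! i}"
    using sorted_nth_mono[OF assms(1)] by (auto intro: order_trans)
  from card_mono[OF _ this] show "length xs - q \<le> card {i. i < length xs \<and> z \<le> xs ! i}" by simp
next
  assume card: "length xs - q \<le> card {i. i < length xs \<and> z \<le> xs ! i}"
  show "z \<le> xs ! q"
  proof (rule ccontr)
    assume "\<not> z \<le> xs ! q"
    then have "{i. i < length xs \<and> z \<le> xs ! i} \<subseteq> {Suc q..<length xs}"
      using sorted_nth_mono[OF assms(1), of _ q] assms(2) by (auto simp: not_less intro: order.trans)
    from card_mono[OF _ this] card assms(2) show False by simp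
  qed
qed

lemma sorted_nth_le_if_in_drop:
  assumes "sorted xs" "y \<in> set (drop k xs)"
  shows "xs ! k \<le> y"
proof -
  from assms(2) obtain j where "j < length (drop k xs)" "y = drop k xs ! j"
    by (auto simp: in_set_conv_nth)
  then have "k + j < length xs" "y = xs ! (k + j)" by auto
  with sorted_nth_mono[OF assms(1), of k "k + j"] show ?thesis by simp
qed

lemma sorted_le_nth_if_in_take:
  assumes "sorted xs" "k \<le> length xs" "y \<in> set (take k xs)"
  shows "y \<le> xs ! (k - 1)"
proof -
  from assms(3) obtain j where "j < k" "j < length xs" "y = xs ! j"
    by (auto simp: in_set_conv_nth)
  with sorted_nth_mono[OF assms(1), of j "k - 1"] assms(2) show ?thesis by simp
qed

lemma sort_map_uminus:
  fixes xs :: "'a::linordered_ab_group_add list"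
  shows "sort (map uminus xs) = rev (map uminus (sort xs))"
proof (rule properties_for_sort)
  have "sorted_wrt (\<lambda>a b. b \<le> a) (map uminus (sort xs))"
    using sorted_sort[of xs] unfolding sorted_wrt_map by (rule sorted_wrt_mono_rel[rotated]) auto
  then show "sorted (rev (map uminus (sort xs)))"
    by (simp add: sorted_wrt_rev)
qed (simp add: mset_map)

lemma card_subset_filter_bounds:
  assumes "C \<subseteq> {..<n}"
  shows "card {j\<in>C. Q j} \<le> card {j. j < n \<and> Q j}"
    and "card {j. j < n \<and> Q j} \<le> card {j\<in>C. Q j} + (n - card C)"
proof -
  have fin: "finite C" using assms finite_subset by blast
  show "card {j\<in>C. Q j} \<le> card {j. j < n \<and> Q j}"
    using assms by (intro card_mono) auto
  have "card {j. j < n \<and> Q j} \<le> card ({j\<in>C. Q j} \<union> ({..<n} - C))"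
    using fin by (intro card_mono) auto
  also have "\<dots> \<le> card {j\<in>C. Q j} + card ({..<n} - C)"
    by (rule card_Un_le)
  also have "card ({..<n} - C) = n - card C"
    using assms fin by (simp add: card_Diff_subset)
  finally show "card {j. j < n \<and> Q j} \<le> card {j\<in>C. Q j} + (n - card C)" .
qed

lemma intersect_if_card_sum_gt:
  assumes "finite C" "S1 \<subseteq> C" "S2 \<subseteq> C" "card C < card S1 + card S2"
  shows "S1 \<inter> S2 \<noteq> {}"
proof
  assume "S1 \<inter> S2 = {}"
  with assms(1-3) have "card S1 + card S2 = card (S1 \<union> S2)"
    by (simp add: card_Un_disjoint finite_subset)
  also have "\<dots> \<le> card C" using assms(1-3) by (intro card_mono) auto
  finally show False using assms(4) by simp
qed

lemma limsup_at_top_real: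
  fixes g :: "real \<Rightarrow> real"
  assumes "\<And>t. 0 \<le> t \<Longrightarrow> b \<le> g t" "\<And>t. 0 \<le> t \<Longrightarrow> g t \<le> B"
  shows "\<exists>A. (\<forall>\<eta>>0. \<exists>T. \<forall>t\<ge>T. g t \<le> A + \<eta>) \<and> (\<forall>\<theta>>0. \<forall>t. \<exists>s\<ge>t. A - \<theta> < g s)"
proof -
  define h where "h t = (SUP s\<in>{max t 0..}. g s)" for t
  have bdd: "bdd_above (g ` {max t 0..})" for t
    using assms(2) by (intro bdd_aboveI2[where M=B]) auto
  have g_le_h: "g s \<le> h t" if "max t 0 \<le> s" for s t
    unfolding h_def using that bdd by (intro cSUP_upper) auto
  have "b \<le> h t" for t
    using assms(1)[of "max t 0"] g_le_h[of t "max t 0"] by simp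
  then have bdd_h: "bdd_below (range h)" by (intro bdd_belowI2)
  define A where "A = (INF t. h t)"
  have "\<exists>T. \<forall>t\<ge>T. g t \<le> A + \<eta>" if \<eta>: "0 < \<eta>" for \<eta>
  proof -
    obtain T where "h T < A + \<eta>"
      using \<eta> cINF_less_iff[OF UNIV_not_empty bdd_h, of "A + \<eta>"] unfolding A_def by auto
    then show ?thesis using g_le_h[of T] by (intro exI[of _ "max T 0"]) force
  qed
  moreover have "\<exists>s\<ge>t. A - \<theta> < g s" if "0 < \<theta>" for \<theta> t
  proof -
    have "A - \<theta> < h t" using that cINF_lower[OF bdd_h, of t] unfolding A_def by simp
    then obtain s where "max t 0 \<le> s" "A - \<theta> < g s"
      using less_cSUP_iff[OF _ bdd, of t] unfolding h_def by auto
    then show ?thesis by auto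
  qed
  ultimately show ?thesis by blast
qed

section \<open>Snapshots and destinations\<close>

lemma length_snapshot [simp]: "length (snapshot n U t) = n"
  by (simp add: snapshot_def)

lemma sorted_snapshot: "sorted (snapshot n U t)"
  by (simp add: snapshot_def)

lemma card_snapshot_nth:
  "card {q. q < n \<and> Q (snapshot n U t ! q)} = card {j. j < n \<and> Q (U j t)}"
proof -
  have "card {q. q < n \<and> Q (snapshot n U t ! q)} = length (filter Q (snapshot n U t))"
    by (simp add: length_filter_conv_card)
  also have "\<dots> = length (filter Q (map (\<lambda>j. U j t) [0..<n]))"
    unfolding snapshot_def by (metis mset_filter size_mset mset_sort)
  also have "\<dots> = card {j. j < n \<and> Q (U j t)}"
    by (simp add: length_filter_conv_card cong: conj_cong)
  finally show ?thesis .
qed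

lemma snapshot_nth_le_iff:
  "q < n \<Longrightarrow> snapshot n U t ! q \<le> z \<longleftrightarrow> Suc q \<le> card {j. j < n \<and> U j t \<le> z}"
  using sorted_nth_le_iff_card[OF sorted_snapshot, of q n U t z] card_snapshot_nth[of n "\<lambda>v. v \<le> z"]
  by simp

lemma snapshot_nth_ge_iff:
  "q < n \<Longrightarrow> z \<le> snapshot n U t ! q \<longleftrightarrow> n - q \<le> card {j. j < n \<and> z \<le> U j t}"
  using sorted_nth_ge_iff_card[OF sorted_snapshot, of q n U t z] card_snapshot_nth[of n "\<lambda>v. z \<le> v"]
  by simp

lemma snapshot_uminus_nth:
  assumes "q < n"
  shows "snapshot n (\<lambda>j t. - U j t) t ! q = - (snapshot n U t ! (n - 1 - q))"
proof -
  have "snapshot n (\<lambda>j t. - U j t) t = rev (map uminus (snapshot n U t))"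
    unfolding snapshot_def using sort_map_uminus[of "map (\<lambda>j. U j t) [0..<n]"] by (simp add: comp_def)
  with assms show ?thesis by (simp add: rev_nth)
qed

lemma count_mset_take_drop:
  "count (mset xs) v = count (mset (take k xs)) v + count (mset (drop k xs)) v"
  by (metis append_take_drop_id count_union mset_append)

lemma count_trim2f:
  "count (trim2f n f P x) v =
     count (mset P) v - (if v < x then count (mset (take (2*f) P)) v else 0)
        - (if x < v then count (mset (drop (n - 2*f) P)) v else 0)"
  by (simp add: trim2f_def mset_filter)

lemma center_trim2f:
  fixes P :: "real list"
  assumes P: "sorted P" "length P = n" and "x \<in> set P" and "2 * f < n"
  shows "center (trim2f n f P x) = (min x (P ! (2*f)) + max x (P ! (n - 2*f - 1))) / 2"
proof -
  define T where "T = trim2f n f P x"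
  define lo where "lo = P ! (2*f)"
  define hi where "hi = P ! (n - 2*f - 1)"
  have "0 < count T x"
    using \<open>x \<in> set P\<close> unfolding T_def by (simp add: count_trim2f)
  then have x_in: "x \<in># T" by simp
  have lo_le: "min x lo \<le> v" if "v \<in># T" for v
  proof (rule ccontr)
    assume "\<not> min x lo \<le> v"
    then have "v < x" and "v \<notin> set (drop (2*f) P)"
      using sorted_nth_le_if_in_drop[OF P(1), of v "2*f"] by (auto simp: lo_def)
    then have "count T v = 0"
      unfolding T_def count_trim2f using count_mset_take_drop[of P v "2*f"] by (simp add: count_mset_0_iff)
    with that show False by (simp flip: count_greater_zero_iff)
  qed
  have lo_in: "min x lo \<in># T"
  proof (cases "x \<le> lo")
    case False
    then have "lo \<in> set (drop (2*f) P)"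
      using assms by (auto simp: lo_def in_set_conv_nth intro!: exI[of _ 0])
    then have "0 < count T lo"
      unfolding T_def count_trim2f using count_mset_take_drop[of P lo "2*f"] False by simp
    with False show ?thesis by simp
  qed (use x_in in simp)
  have le_hi: "v \<le> max x hi" if "v \<in># T" for v
  proof (rule ccontr)
    assume "\<not> v \<le> max x hi"
    then have "x < v" and "v \<notin> set (take (n - 2*f) P)"
      using sorted_le_nth_if_in_take[OF P(1), of "n - 2*f" v] P(2) by (auto simp: hi_def)
    then have "count T v = 0"
      unfolding T_def count_trim2f using count_mset_take_drop[of P v "n - 2*f"] by (simp add: count_mset_0_iff)
    with that show False by (simp flip: count_greater_zero_iff)
  qed
  have hi_in: "max x hi \<in># T"
  proof (cases "hi \<le> x")
    case False
    then have "hi \<in> set (take (n - 2*f) P)"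
      using assms by (auto simp: hi_def in_set_conv_nth intro!: exI[of _ "n - 2*f - 1"])
    then have "0 < count T hi"
      unfolding T_def count_trim2f using count_mset_take_drop[of P hi "n - 2*f"] False by simp
    with False show ?thesis by simp
  qed (use x_in in simp)
  have "Min (set_mset T) = min x lo" by (rule Min_eqI) (use lo_le lo_in in auto)
  moreover have "Max (set_mset T) = max x hi" by (rule Max_eqI) (use le_hi hi_in in auto)
  ultimately show ?thesis unfolding center_def T_def lo_def hi_def by simp
qed

lemma destination_eq:
  fixes P :: "real list"
  assumes "sorted P" "length P = n" "x \<in> set P" "2 * f < n"
  shows "destination n f P x =
    (if x \<le> P ! f \<or> P ! (n - f - 1) \<le> x
     then (min x (P ! (2*f)) + max x (P ! (n - 2*f - 1))) / 2 else x)"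
  using center_trim2f[OF assms] by (simp add: destination_def elected_def)

lemma destination_uminus:
  assumes "i < n" "2 * f < n"
  shows "destination n f (snapshot n (\<lambda>j t. - U j t) t) (- U i t) =
    - destination n f (snapshot n U t) (U i t)"
proof -
  let ?P = "snapshot n U t" and ?Q = "snapshot n (\<lambda>j t. - U j t) t"
  have "U i t \<in> set ?P" "- U i t \<in> set ?Q" using assms by (auto simp: snapshot_def)
  moreover have "?Q ! f = - (?P ! (n - f - 1))" "?Q ! (n - f - 1) = - (?P ! f)"
    "?Q ! (2*f) = - (?P ! (n - 2*f - 1))" "?Q ! (n - 2*f - 1) = - (?P ! (2*f))"
    using assms by (simp_all add: snapshot_uminus_nth diff_diff_left)
  ultimately show ?thesis
    using assms(2) by (auto simp: destination_eq[OF sorted_snapshot length_snapshot]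
        simp flip: minus_max_eq_min minus_min_eq_max) (simp_all add: field_simps)
qed

lemma between_uminus: "between (- a) (- b) (- y) = between a b y"
  by (auto simp: between_def)

lemma correct_robot_uminus:
  assumes "correct_robot n f U i \<delta> tL tMs tMe" "i < n" "2 * f < n"
  shows "correct_robot n f (\<lambda>j t. - U j t) i \<delta> tL tMs tMe"
proof -
  have continuous_uminus: "continuous_on S (\<lambda>t. - U i t) = continuous_on S (U i)" for S
    using continuous_on_minus[of S "\<lambda>t. - U i t"] continuous_on_minus[of S "U i"] by auto
  from assms(1) show ?thesis
    unfolding correct_robot_def Let_def destination_uminus[OF assms(2,3)] between_uminus
      continuous_uminus minus_diff_minus abs_minus_cancel neg_equal_iff_equal .
qed

lemma correct_robotD:
  assumes "correct_robot n f U i \<delta> tL tMs tMe"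
  shows "0 < \<delta>" and "0 \<le> tL 0" and "tL k \<le> tMs k" and "tMs k \<le> tMe k" and "tMe k \<le> tL (Suc k)"
    and "filterlim tL at_top sequentially"
    and "t \<in> {0..tMs 0} \<Longrightarrow> U i t = U i 0"
    and "t \<in> {tMe k..tMs (Suc k)} \<Longrightarrow> U i t = U i (tMe k)"
    and "tMs k \<le> s \<Longrightarrow> s \<le> s' \<Longrightarrow> s' \<le> tMe k \<Longrightarrow>
      between (U i s) (destination n f (snapshot n U (tL k)) (U i (tL k))) (U i s')"
    and "min \<delta> \<bar>destination n f (snapshot n U (tL k)) (U i (tL k)) - U i (tL k)\<bar>
      \<le> \<bar>U i (tMe k) - U i (tL k)\<bar>"
  using assms unfolding correct_robot_def Let_def by blast+

locale correct_majority =
  fixes n f :: nat and C :: "nat set"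
  assumes correct_subset: "C \<subseteq> {..<n}"
    and card_correct: "n - f \<le> card C"
    and four_f_less: "4 * f < n"
begin

abbreviation target :: "(nat \<Rightarrow> real \<Rightarrow> real) \<Rightarrow> real \<Rightarrow> nat \<Rightarrow> real" where
  "target U t i \<equiv> destination n f (snapshot n U t) (U i t)"

lemma finite_correct: "finite C"
  using correct_subset finite_subset by blast

lemma card_correct_le: "card C \<le> n"
  using card_mono[OF _ correct_subset] by simp

lemma correct_nonempty: "C \<noteq> {}"
  using card_correct four_f_less by auto

lemma snapshot_le_if_card_correct:
  "q < n \<Longrightarrow> Suc q \<le> card {j\<in>C. U j t \<le> z} \<Longrightarrow> snapshot n U t ! q \<le> z"
  using snapshot_nth_le_iff card_subset_filter_bounds(1)[OF correct_subset] by (meson order_trans)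

lemma snapshot_ge_if_card_correct:
  "q < n \<Longrightarrow> n - q \<le> card {j\<in>C. z \<le> U j t} \<Longrightarrow> z \<le> snapshot n U t ! q"
  using snapshot_nth_ge_iff card_subset_filter_bounds(1)[OF correct_subset] by (meson order_trans)

lemma card_correct_le_if_snapshot_le:
  "q < n \<Longrightarrow> snapshot n U t ! q \<le> z \<Longrightarrow> Suc q - (n - card C) \<le> card {j\<in>C. U j t \<le> z}"
  using snapshot_nth_le_iff card_subset_filter_bounds(2)[OF correct_subset, of "\<lambda>j. U j t \<le> z"]
  by fastforce

lemma card_correct_ge_if_snapshot_ge:
  "q < n \<Longrightarrow> z \<le> snapshot n U t ! q \<Longrightarrow> card C - q \<le> card {j\<in>C. z \<le> U j t}"
  using snapshot_nth_ge_iff card_subset_filter_bounds(2)[OF correct_subset, of "\<lambda>j. z \<le> U j t"]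
    card_correct_le by fastforce

context
  fixes U :: "nat \<Rightarrow> real \<Rightarrow> real" and t :: real and i :: nat
  assumes i_correct: "i \<in> C"
begin

private abbreviation "P \<equiv> snapshot n U t"

lemma target_eq:
  "target U t i = (if U i t \<le> P ! f \<or> P ! (n - f - 1) \<le> U i t
     then (min (U i t) (P ! (2*f)) + max (U i t) (P ! (n - 2*f - 1))) / 2 else U i t)"
proof (rule destination_eq[OF sorted_snapshot length_snapshot])
  show "U i t \<in> set P" using i_correct correct_subset by (auto simp: snapshot_def)
qed (use four_f_less in simp)

private lemma snapshot_mono: "a \<le> b \<Longrightarrow> b < n \<Longrightarrow> P ! a \<le> P ! b"
  using sorted_nth_mono[OF sorted_snapshot] by simp

private lemma snapshot_2f_lt_if_few_above:
  assumes "card {j\<in>C. z \<le> U j t} < card C - 2*f"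
  shows "P ! (2*f) < z"
  using card_correct_ge_if_snapshot_ge[of "2*f" z U t] assms four_f_less by fastforce

lemma card_above_if_target_gt:
  assumes "U i t < target U t i"
  shows "card C - f \<le> card {j\<in>C. U i t \<le> U j t}"
proof -
  have "P ! (n - 2*f - 1) \<le> P ! (n - f - 1)" by (rule snapshot_mono) (use four_f_less in auto)
  then have "U i t \<le> P ! f"
    using assms target_eq by (auto split: if_splits)
  then show ?thesis using card_correct_ge_if_snapshot_ge four_f_less by simp
qed

lemma card_below_if_target_lt:
  assumes "target U t i < U i t"
  shows "card C - f \<le> card {j\<in>C. U j t \<le> U i t}"
proof -
  have "P ! f \<le> P ! (2*f)" by (rule snapshot_mono) (use four_f_less in auto)
  then have "P ! (n - f - 1) \<le> U i t"
    using assms target_eq by (auto split: if_splits)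
  then show ?thesis using card_correct_le_if_snapshot_le[of "n - f - 1"] four_f_less card_correct_le
    by fastforce
qed

lemma target_le_midpoint:
  assumes "\<forall>j\<in>C. U j t \<le> M"
  shows "target U t i \<le> (U i t + M) / 2"
proof -
  have "{j\<in>C. U j t \<le> M} = C" using assms by auto
  then have "P ! (n - 2*f - 1) \<le> M"
    using snapshot_le_if_card_correct[of "n - 2*f - 1"] four_f_less card_correct by simp
  with assms i_correct show ?thesis using target_eq by (auto split: if_splits)
qed

lemma target_ge_midpoint:
  assumes "\<forall>j\<in>C. a \<le> U j t"
  shows "(U i t + a) / 2 \<le> target U t i"
proof -
  have "{j\<in>C. a \<le> U j t} = C" using assms by auto
  then have "a \<le> P ! (2*f)"
    using snapshot_ge_if_card_correct[of "2*f"] four_f_less card_correct by simp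
  with assms i_correct show ?thesis using target_eq by (auto split: if_splits)
qed

lemma target_lt_midpoint_if_few_above:
  assumes "target U t i < U i t" "card {j\<in>C. z \<le> U j t} < card C - 2*f"
  shows "target U t i < (U i t + z) / 2"
proof -
  have "P ! f \<le> P ! (2*f)" "P ! (n - 2*f - 1) \<le> P ! (n - f - 1)"
    by (rule snapshot_mono; use four_f_less in simp)+
  with assms(1) snapshot_2f_lt_if_few_above[OF assms(2)] show ?thesis
    using target_eq by (auto split: if_splits)
qed

lemma topmost_target_lt_if_few_above:
  assumes "\<forall>j\<in>C. U j t \<le> U i t" "z \<le> U i t" "card {j\<in>C. z \<le> U j t} < card C - 2*f"
  shows "target U t i < U i t"
proof -
  have "{j\<in>C. U j t \<le> U i t} = C" using assms by auto
  then have "P ! (n - f - 1) \<le> U i t"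
    using snapshot_le_if_card_correct[of "n - f - 1"] four_f_less card_correct by simp
  moreover have "P ! (n - 2*f - 1) \<le> P ! (n - f - 1)"
    by (rule snapshot_mono) (use four_f_less in simp_all)
  ultimately show ?thesis using assms(2) snapshot_2f_lt_if_few_above[OF assms(3)] target_eq
    by (auto split: if_splits)
qed

lemma target_le_if_many_below:
  assumes "U i t \<le> y" "card C - f \<le> card {j\<in>C. U j t \<le> y}"
  shows "target U t i \<le> y"
proof -
  have "P ! (n - 2*f - 1) \<le> y"
    using snapshot_le_if_card_correct[of "n - 2*f - 1"] four_f_less card_correct assms(2) by simp
  then show ?thesis using assms(1) target_eq by (auto split: if_splits)
qed

end

end

section \<open>Executions\<close>

locale corda_execution = correct_majority +
  fixes U :: "nat \<Rightarrow> real \<Rightarrow> real" and \<delta> :: "nat \<Rightarrow> real" and tL tMs tMe :: "nat \<Rightarrow> nat \<Rightarrow> real"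
  assumes correct_robots: "\<forall>i\<in>C. correct_robot n f U i (\<delta> i) (tL i) (tMs i) (tMe i)"
begin

abbreviation look_pos :: "nat \<Rightarrow> nat \<Rightarrow> real" where
  "look_pos i k \<equiv> U i (tL i k)"

abbreviation look_target :: "nat \<Rightarrow> nat \<Rightarrow> real" where
  "look_target i k \<equiv> target U (tL i k) i"

lemma corda_execution_uminus: "corda_execution n f C (\<lambda>j t. - U j t) \<delta> tL tMs tMe"
proof (rule corda_execution.intro[OF correct_majority_axioms], unfold_locales)
  show "\<forall>i\<in>C. correct_robot n f (\<lambda>j t. - U j t) i (\<delta> i) (tL i) (tMs i) (tMe i)"
    using correct_robots correct_subset four_f_less by (auto intro: correct_robot_uminus)
qed

context
  fixes i assumes i_correct: "i \<in> C"
begin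

lemmas correct_i = correct_robotD[OF correct_robots[rule_format, OF i_correct]]

lemma delta_pos: "0 < \<delta> i"
  by (fact correct_i(1))

lemma tL_mono: "k \<le> k' \<Longrightarrow> tL i k \<le> tL i k'"
  using lift_Suc_mono_le[of "tL i"] correct_i(3-5) by (meson order_trans)

lemma tL_unbounded: "\<exists>k. T < tL i k"
  using correct_i(6) by (auto simp: filterlim_at_top_dense eventually_sequentially)

lemma position_before_first_look: "0 \<le> t \<Longrightarrow> t \<le> tL i 0 \<Longrightarrow> U i t = U i 0"
  using correct_i(3)[of 0] by (intro correct_i(7)) simp

text \<open>Within a cycle the robot only moves during its Move phase, so its position at any time
  of the cycle is its position at the nearest instant of that phase.\<close>
lemma position_clamp:
  assumes "tL i k \<le> s" "s \<le> tL i (Suc k)"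
  shows "U i s = U i (max (tMs i k) (min s (tMe i k)))"
proof (cases "s \<le> tMs i k")
  case True
  then have clamp: "max (tMs i k) (min s (tMe i k)) = tMs i k" using correct_i(4)[of k] by linarith
  show ?thesis
  proof (cases k)
    case 0
    have "U i s = U i 0" using assms(1) correct_i(2) True 0 by (intro correct_i(7)) simp
    moreover have "U i (tMs i 0) = U i 0" using correct_i(2) correct_i(3)[of 0] by (intro correct_i(7)) simp
    ultimately show ?thesis using clamp 0 by simp
  next
    case (Suc k')
    have "tMe i k' \<le> tL i k" using correct_i(5)[of k'] Suc by simp
    then have "U i s = U i (tMe i k')" "U i (tMs i k) = U i (tMe i k')"
      using assms(1) True correct_i(3)[of k] Suc by (auto intro!: correct_i(8))
    then show ?thesis using clamp by simp
  qed
next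
  case False
  show ?thesis
  proof (cases "s \<le> tMe i k")
    case False
    moreover have "s \<le> tMs i (Suc k)" using assms(2) correct_i(3)[of "Suc k"] by linarith
    ultimately have "U i s = U i (tMe i k)" by (intro correct_i(8)) simp
    with False show ?thesis using correct_i(4)[of k] by (simp add: max_def)
  qed (use False in simp)
qed

lemma between_in_cycle:
  assumes "tL i k \<le> s" "s \<le> s'" "s' \<le> tL i (Suc k)"
  shows "between (U i s) (look_target i k) (U i s')"
  using correct_i(9)[of k "max (tMs i k) (min s (tMe i k))" "max (tMs i k) (min s' (tMe i k))"]
    position_clamp[of k s] position_clamp[of k s'] assms correct_i(3-5)[of k] by simp

lemma between_look_in_cycle:
  "tL i k \<le> t \<Longrightarrow> t \<le> tL i (Suc k) \<Longrightarrow> between (look_pos i k) (look_target i k) (U i t)"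
  using between_in_cycle[of k "tL i k" t] by simp

lemma between_look_Suc: "between (look_pos i k) (look_target i k) (look_pos i (Suc k))"
  using between_look_in_cycle[of k "tL i (Suc k)"] correct_i(3-5)[of k] by simp

lemma look_pos_Suc_progress:
  "min (\<delta> i) \<bar>look_target i k - look_pos i k\<bar> \<le> \<bar>look_pos i (Suc k) - look_pos i k\<bar>"
proof -
  have "look_pos i (Suc k) = U i (tMe i k)"
    using correct_i(8)[of "tL i (Suc k)" k] correct_i(3)[of "Suc k"] correct_i(5)[of k] by simp
  then show ?thesis using correct_i(10)[of k] by simp
qed

lemma cycle_containing:
  assumes "tL i K \<le> t"
  shows "\<exists>k\<ge>K. tL i k \<le> t \<and> t < tL i (Suc k)"
proof -
  obtain N where "t < tL i N" using tL_unbounded by blast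
  moreover have "tL i N \<le> tL i (Suc (max K N))" by (rule tL_mono) simp
  ultimately have ex: "\<exists>k. K \<le> k \<and> t < tL i (Suc k)"
    by (intro exI[of _ "max K N"]) auto
  define k where "k = (LEAST k. K \<le> k \<and> t < tL i (Suc k))"
  have k: "K \<le> k" "t < tL i (Suc k)" using LeastI_ex[OF ex] unfolding k_def by auto
  have "tL i k \<le> t"
  proof (cases "k = K")
    case False
    then have "\<not> t < tL i (Suc (k - 1))"
      using not_less_Least[of "k - 1" "\<lambda>k. K \<le> k \<and> t < tL i (Suc k)"] k unfolding k_def by fastforce
    with False k(1) show ?thesis by (simp add: not_less)
  qed (use assms in simp)
  with k show ?thesis by blast
qed

lemma last_look_before:
  assumes "tL i k0 < t"
  shows "\<exists>k\<ge>k0. tL i k < t \<and> t \<le> tL i (Suc k)"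
proof -
  obtain N where N: "t < tL i N" using tL_unbounded by blast
  have "k < N" if "tL i k < t" for k
    using N tL_mono[of N k] that by (cases "N \<le> k") auto
  then have fin: "finite {k. tL i k < t}"
    unfolding finite_nat_set_iff_bounded by blast
  define k where "k = Max {k. tL i k < t}"
  have "tL i k < t" unfolding k_def using Max_in[OF fin] assms by blast
  moreover have "k0 \<le> k" unfolding k_def using Max_ge[OF fin] assms by blast
  moreover have "t \<le> tL i (Suc k)"
  proof (rule ccontr)
    assume "\<not> t \<le> tL i (Suc k)"
    then have "Suc k \<le> k" using Max_ge[OF fin, of "Suc k"] by (simp add: k_def not_le)
    then show False by simp
  qed
  ultimately show ?thesis by blast
qed

end

subsection \<open>Trapping\<close>

lemma position_le_if_looks_le:
  assumes "i \<in> C" "t0 \<le> t"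
    and before: "\<forall>k. tL i k < t \<longrightarrow> tL i k < t0 \<Longrightarrow> U i t \<le> y"
    and looks: "\<And>k. t0 \<le> tL i k \<Longrightarrow> tL i k < t \<Longrightarrow> look_pos i k \<le> y \<and> look_target i k \<le> y"
  shows "U i t \<le> y"
proof (cases "\<forall>k. tL i k < t \<longrightarrow> tL i k < t0")
  case False
  then obtain k0 where k0: "tL i k0 < t" "t0 \<le> tL i k0" by (auto simp: not_less)
  obtain k where k: "k0 \<le> k" "tL i k < t" "t \<le> tL i (Suc k)"
    using last_look_before[OF assms(1) k0(1)] by blast
  have "t0 \<le> tL i k" using tL_mono[OF assms(1) k(1)] k0(2) by linarith
  then have "look_pos i k \<le> y" "look_target i k \<le> y" using looks k(2) by auto
  moreover have "between (look_pos i k) (look_target i k) (U i t)"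
    using between_look_in_cycle[OF assms(1)] k by simp
  ultimately show ?thesis by (auto simp: between_def)
qed (use before in blast)

text \<open>If some Look after t0 broke the bound, take the earliest such Look over all robots of S:
  at that instant all of S are still at most y, so step shows it does not break the bound.\<close>
lemma stays_below:
  assumes "S \<subseteq> C"
    and before: "\<And>j t. j \<in> S \<Longrightarrow> t0 \<le> t \<Longrightarrow> \<forall>k. tL j k < t \<longrightarrow> tL j k < t0 \<Longrightarrow> U j t \<le> y"
    and step: "\<And>i k. i \<in> S \<Longrightarrow> t0 \<le> tL i k \<Longrightarrow> \<forall>j\<in>S. U j (tL i k) \<le> y \<Longrightarrow> look_target i k \<le> y"
  shows "\<forall>j\<in>S. \<forall>t\<ge>t0. U j t \<le> y"
proof -
  define bad where "bad i k \<longleftrightarrow> t0 \<le> tL i k \<and> \<not> (look_pos i k \<le> y \<and> look_target i k \<le> y)" for i k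
  have below: "U j t \<le> y" if "j \<in> S" "t0 \<le> t" "\<And>k. tL j k < t \<Longrightarrow> \<not> bad j k" for j t
    using position_le_if_looks_le[of j t0 t y] before that assms(1) unfolding bad_def by blast
  have "\<not> bad i k" if "i \<in> S" for i k
  proof (rule ccontr)
    define S' where "S' = {i\<in>S. \<exists>k. bad i k}"
    define first where "first i = (LEAST k. bad i k)" for i
    assume "\<not> \<not> bad i k"
    with that have S': "finite S'" "S' \<noteq> {}"
      using assms(1) finite_correct by (auto simp: S'_def intro: finite_subset)
    have first: "bad i (first i)" if "i \<in> S'" for i
      using that LeastI_ex[of "bad i"] by (auto simp: S'_def first_def)
    define \<tau> where "\<tau> = Min ((\<lambda>i. tL i (first i)) ` S')"
    have "\<tau> \<in> (\<lambda>i. tL i (first i)) ` S'" unfolding \<tau>_def using S' by (intro Min_in) auto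
    then obtain i0 where i0: "i0 \<in> S'" "tL i0 (first i0) = \<tau>" by force
    have \<tau>_le: "\<tau> \<le> tL j k" if "j \<in> S" "bad j k" for j k
    proof -
      have "j \<in> S'" using that by (auto simp: S'_def)
      then have "\<tau> \<le> tL j (first j)" unfolding \<tau>_def using S'(1) by simp
      also have "\<dots> \<le> tL j k"
        using that assms(1) by (intro tL_mono) (auto simp: first_def intro: Least_le)
      finally show ?thesis .
    qed
    have i0_S: "i0 \<in> S" and "t0 \<le> \<tau>" using first[OF i0(1)] i0 by (auto simp: S'_def bad_def)
    then have "\<forall>j\<in>S. U j \<tau> \<le> y" using below \<tau>_le by force
    with step[OF i0_S] i0(2) i0_S \<open>t0 \<le> \<tau>\<close> have "\<not> bad i0 (first i0)"
      by (auto simp: bad_def)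
    with first[OF i0(1)] show False by contradiction
  qed
  with below show ?thesis by blast
qed

lemma stays_above:
  assumes "S \<subseteq> C"
    and before: "\<And>j t. j \<in> S \<Longrightarrow> t0 \<le> t \<Longrightarrow> \<forall>k. tL j k < t \<longrightarrow> tL j k < t0 \<Longrightarrow> y \<le> U j t"
    and step: "\<And>i k. i \<in> S \<Longrightarrow> t0 \<le> tL i k \<Longrightarrow> \<forall>j\<in>S. y \<le> U j (tL i k) \<Longrightarrow> y \<le> look_target i k"
  shows "\<forall>j\<in>S. \<forall>t\<ge>t0. y \<le> U j t"
proof -
  have target_uminus: "destination n f (snapshot n (\<lambda>j t. - U j t) (tL i k)) (- U i (tL i k))
      = - look_target i k" if "i \<in> S" for i k
    using that assms(1) correct_subset four_f_less by (intro destination_uminus) auto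
  have "\<forall>j\<in>S. \<forall>t\<ge>t0. - U j t \<le> - y"
    by (rule corda_execution.stays_below[OF corda_execution_uminus assms(1)])
      (use before step target_uminus in auto)
  then show ?thesis by simp
qed

subsection \<open>Limit superior and inferior of the correct positions\<close>

lemma bounded_above: "\<exists>B. \<forall>j\<in>C. \<forall>t\<ge>0. U j t \<le> B"
proof -
  define B where "B = Max ((\<lambda>j. U j 0) ` C)"
  have "\<forall>j\<in>C. \<forall>t\<ge>0. U j t \<le> B"
  proof (rule stays_below[OF order_refl])
    fix j t assume j: "j \<in> C" "0 \<le> t" "\<forall>k. tL j k < t \<longrightarrow> tL j k < 0"
    then have "t \<le> tL j 0" using correct_i(2)[OF j(1)] by (cases "tL j 0 < t") auto
    then have "U j t = U j 0" using position_before_first_look[OF j(1,2)] by simp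
    then show "U j t \<le> B" unfolding B_def using finite_correct j(1) by simp
  next
    fix i k assume "i \<in> C" "\<forall>j\<in>C. U j (tL i k) \<le> B"
    then show "look_target i k \<le> B" using target_le_midpoint[of i U "tL i k" B] by fastforce
  qed
  then show ?thesis by blast
qed

lemma bounded_below: "\<exists>b. \<forall>j\<in>C. \<forall>t\<ge>0. b \<le> U j t"
proof -
  obtain B where "\<forall>j\<in>C. \<forall>t\<ge>0. - U j t \<le> B"
    using corda_execution.bounded_above[OF corda_execution_uminus] by blast
  then have "\<forall>j\<in>C. \<forall>t\<ge>0. - B \<le> U j t" by force
  then show ?thesis by blast
qed

lemma limsup_positions:
  "\<exists>A. (\<forall>\<eta>>0. \<exists>T. \<forall>t\<ge>T. \<forall>j\<in>C. U j t \<le> A + \<eta>) \<and> (\<forall>\<theta>>0. \<forall>t. \<exists>s\<ge>t. \<exists>j\<in>C. A - \<theta> < U j s)"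
proof -
  define M where "M t = Max ((\<lambda>j. U j t) ` C)" for t
  have le_M: "U j t \<le> M t" if "j \<in> C" for j t
    unfolding M_def using finite_correct that by simp
  have M_attained: "\<exists>j\<in>C. U j t = M t" for t
  proof -
    have "M t \<in> (\<lambda>j. U j t) ` C"
      unfolding M_def using finite_correct correct_nonempty by (intro Max_in) auto
    then show ?thesis by force
  qed
  obtain b B where "\<forall>j\<in>C. \<forall>t\<ge>0. b \<le> U j t \<and> U j t \<le> B"
    using bounded_above bounded_below by meson
  then have "b \<le> M t" "M t \<le> B" if "0 \<le> t" for t
    using that M_attained[of t] correct_nonempty le_M by (fastforce, fastforce)
  then obtain A where "\<forall>\<eta>>0. \<exists>T. \<forall>t\<ge>T. M t \<le> A + \<eta>" "\<forall>\<theta>>0. \<forall>t. \<exists>s\<ge>t. A - \<theta> < M s"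
    using limsup_at_top_real[of b M B] by blast
  then show ?thesis using le_M M_attained by (metis order.trans)
qed

lemma liminf_positions:
  "\<exists>a. (\<forall>\<eta>>0. \<exists>T. \<forall>t\<ge>T. \<forall>j\<in>C. a - \<eta> \<le> U j t) \<and> (\<forall>\<theta>>0. \<forall>t. \<exists>s\<ge>t. \<exists>j\<in>C. U j s < a + \<theta>)"
proof -
  obtain A where A: "\<forall>\<eta>>0. \<exists>T. \<forall>t\<ge>T. \<forall>j\<in>C. - U j t \<le> A + \<eta>"
      "\<forall>\<theta>>0. \<forall>t. \<exists>s\<ge>t. \<exists>j\<in>C. A - \<theta> < - U j s"
    using corda_execution.limsup_positions[OF corda_execution_uminus] by blast
  show ?thesis
  proof (rule exI[of _ "- A"], intro conjI allI impI)
    fix \<eta> :: real assume "0 < \<eta>"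
    with A(1) obtain T where "\<forall>t\<ge>T. \<forall>j\<in>C. - U j t \<le> A + \<eta>" by blast
    then show "\<exists>T. \<forall>t\<ge>T. \<forall>j\<in>C. - A - \<eta> \<le> U j t" by force
  next
    fix \<theta> t :: real assume "0 < \<theta>"
    with A(2) obtain s j where "t \<le> s" "j \<in> C" "A - \<theta> < - U j s" by blast
    then show "\<exists>s\<ge>t. \<exists>j\<in>C. U j s < - A + \<theta>" by force
  qed
qed

lemma position_le_after_look:
  assumes "i \<in> C" "look_pos i K \<le> y" "tL i K \<le> t"
    and step: "\<And>k. tL i K \<le> tL i k \<Longrightarrow> look_pos i k \<le> y \<Longrightarrow> look_target i k \<le> y"
  shows "U i t \<le> y"
proof -
  have "\<forall>j\<in>{i}. \<forall>t\<ge>tL i K. U j t \<le> y"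
  proof (rule stays_below)
    fix j t assume "j \<in> {i}" "tL i K \<le> t" "\<forall>k. tL j k < t \<longrightarrow> tL j k < tL i K"
    then show "U j t \<le> y" using assms(2) by force
  qed (use assms(1) step in auto)
  then show ?thesis using assms(3) by simp
qed

lemma position_ge_after_look:
  assumes "i \<in> C" "y \<le> look_pos i K" "tL i K \<le> t"
    and step: "\<And>k. tL i K \<le> tL i k \<Longrightarrow> y \<le> look_pos i k \<Longrightarrow> y \<le> look_target i k"
  shows "y \<le> U i t"
proof -
  have "\<forall>j\<in>{i}. \<forall>t\<ge>tL i K. y \<le> U j t"
  proof (rule stays_above)
    fix j t assume "j \<in> {i}" "tL i K \<le> t" "\<forall>k. tL j k < t \<longrightarrow> tL j k < tL i K"
    then show "y \<le> U j t" using assms(2) by force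
  qed (use assms(1) step in auto)
  then show ?thesis using assms(3) by simp
qed

subsection \<open>Recurrence near the extremes\<close>

context
  fixes A \<eta> \<xi> T :: real
  assumes \<eta>_pos: "0 < \<eta>" and \<xi>_ge: "5 * \<eta> \<le> \<xi>" and \<delta>_ge: "\<forall>i\<in>C. 2 * \<eta> \<le> \<delta> i"
    and below_top: "\<forall>t\<ge>T. \<forall>j\<in>C. U j t \<le> A + \<eta>"
    and few_near_top: "\<forall>t\<ge>T. card {j\<in>C. A - \<xi> \<le> U j t} < card C - 2*f"
begin

lemma upward_move_below_threshold:
  assumes "i \<in> C" "T \<le> tL i k" "look_pos i k < look_target i k"
  shows "look_pos i k < A - \<xi>"
proof (rule ccontr)
  assume "\<not> ?thesis"
  then have "card {j\<in>C. look_pos i k \<le> U j (tL i k)} \<le> card {j\<in>C. A - \<xi> \<le> U j (tL i k)}"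
    using finite_correct by (intro card_mono) auto
  moreover have "card C - f \<le> card {j\<in>C. look_pos i k \<le> U j (tL i k)}"
    by (rule card_above_if_target_gt[OF assms(1) assms(3)])
  ultimately show False using few_near_top assms(2) by fastforce
qed

lemma target_le_if_look_le:
  assumes "i \<in> C" "T \<le> tL i k" "look_pos i k \<le> A - \<eta>"
  shows "look_target i k \<le> A - \<eta>"
proof (cases "look_pos i k < look_target i k")
  case True
  have "look_target i k \<le> (look_pos i k + (A + \<eta>)) / 2"
    using target_le_midpoint[OF assms(1)] below_top assms(2) by auto
  with upward_move_below_threshold[OF assms(1,2) True] \<xi>_ge \<eta>_pos show ?thesis by argo
qed (use assms(3) in simp)

lemma downward_move_ends_low:
  assumes "i \<in> C" "T \<le> tL i k" "look_target i k < look_pos i k"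
  shows "look_pos i (Suc k) \<le> A - \<eta>"
proof -
  have "between (look_pos i k) (look_target i k) (look_pos i (Suc k))"
    by (rule between_look_Suc[OF assms(1)])
  then have between: "look_pos i (Suc k) \<le> look_pos i k" "look_target i k \<le> look_pos i (Suc k)"
    using assms(3) by (auto simp: between_def)
  show ?thesis
  proof (cases "look_pos i k \<le> A - \<eta>")
    case False
    have "look_target i k < (look_pos i k + (A - \<xi>)) / 2"
      using target_lt_midpoint_if_few_above[OF assms(1) assms(3)] few_near_top assms(2) by auto
    with False \<xi>_ge have "2 * \<eta> \<le> look_pos i k - look_target i k" by argo
    moreover have "min (\<delta> i) (look_pos i k - look_target i k) \<le> look_pos i k - look_pos i (Suc k)"
      using look_pos_Suc_progress[OF assms(1), of k] between assms(3) by simp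
    moreover have "look_pos i k \<le> A + \<eta>" using below_top assms(1,2) by auto
    ultimately show ?thesis using \<delta>_ge assms(1) by (auto simp: min_def split: if_splits)
  qed (use between in simp)
qed

lemma low_robot_stays_low:
  assumes "i \<in> C" "T \<le> tL i K" "look_pos i K \<le> A - \<eta>" "tL i K \<le> t"
  shows "U i t \<le> A - \<eta>"
proof (rule position_le_after_look[OF assms(1,3,4)])
  fix k assume "tL i K \<le> tL i k" "look_pos i k \<le> A - \<eta>"
  with assms(2) show "look_target i k \<le> A - \<eta>"
    by (intro target_le_if_look_le[OF assms(1)]) simp_all
qed

lemma high_robot_frozen:
  assumes "i \<in> C" "\<forall>k. T \<le> tL i k \<longrightarrow> A - \<eta> < look_pos i k" "T \<le> tL i k"
  shows "look_target i k = look_pos i k"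
proof (rule linorder_cases[of "look_target i k" "look_pos i k"])
  assume "look_target i k < look_pos i k"
  then have "look_pos i (Suc k) \<le> A - \<eta>" by (rule downward_move_ends_low[OF assms(1,3)])
  moreover have "T \<le> tL i (Suc k)" using tL_mono[OF assms(1), of k "Suc k"] assms(3) by simp
  ultimately show ?thesis using assms(2) by force
next
  assume "look_pos i k < look_target i k"
  then have "look_pos i k < A - \<xi>" by (rule upward_move_below_threshold[OF assms(1,3)])
  then show ?thesis using assms(2,3) \<xi>_ge \<eta>_pos by force
qed

lemma robot_settles:
  assumes "i \<in> C"
  shows "\<exists>K. T \<le> tL i K \<and> ((\<forall>t\<ge>tL i K. U i t \<le> A - \<eta>) \<or>
    (A - \<eta> < look_pos i K \<and> (\<forall>t\<ge>tL i K. U i t = look_pos i K)))"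
proof (cases "\<exists>K. T \<le> tL i K \<and> look_pos i K \<le> A - \<eta>")
  case True
  then obtain K where K: "T \<le> tL i K" "look_pos i K \<le> A - \<eta>" by blast
  then have "\<forall>t\<ge>tL i K. U i t \<le> A - \<eta>" using low_robot_stays_low[OF assms K] by blast
  with K show ?thesis by blast
next
  case False
  have high: "\<forall>k. T \<le> tL i k \<longrightarrow> A - \<eta> < look_pos i k"
  proof (intro allI impI)
    fix k assume "T \<le> tL i k"
    with False show "A - \<eta> < look_pos i k" by (meson not_le)
  qed
  obtain K where K: "T < tL i K" using tL_unbounded[OF assms] by blast
  have frozen: "look_target i k = look_pos i k" if "tL i K \<le> tL i k" for k
    using high_robot_frozen[OF assms high] K that by simp
  have "U i t = look_pos i K" if "tL i K \<le> t" for t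
  proof (rule antisym)
    show "U i t \<le> look_pos i K" by (rule position_le_after_look[OF assms order_refl that]) (use frozen in simp)
    show "look_pos i K \<le> U i t" by (rule position_ge_after_look[OF assms order_refl that]) (use frozen in simp)
  qed
  moreover have "A - \<eta> < look_pos i K" using high K by simp
  ultimately show ?thesis using K less_imp_le by blast
qed

lemma robots_settle:
  "\<exists>T'\<ge>T. \<exists>p. \<forall>i\<in>C. (\<forall>t\<ge>T'. U i t \<le> A - \<eta>) \<or> (A - \<eta> < p i \<and> (\<forall>t\<ge>T'. U i t = p i))"
proof -
  from bchoice[OF ballI[OF robot_settles]] obtain K where K: "\<forall>i\<in>C. T \<le> tL i (K i) \<and>
      ((\<forall>t\<ge>tL i (K i). U i t \<le> A - \<eta>) \<or>
       (A - \<eta> < look_pos i (K i) \<and> (\<forall>t\<ge>tL i (K i). U i t = look_pos i (K i))))" ..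
  define p where "p i = look_pos i (K i)" for i
  define T' where "T' = Max ((\<lambda>i. tL i (K i)) ` C)"
  have T': "tL i (K i) \<le> T'" if "i \<in> C" for i
    unfolding T'_def using finite_correct that by simp
  obtain i0 where "i0 \<in> C" using correct_nonempty by blast
  with K have "T \<le> tL i0 (K i0)" by blast
  with T'[OF \<open>i0 \<in> C\<close>] have "T \<le> T'" by simp
  moreover have "(\<forall>t\<ge>T'. U i t \<le> A - \<eta>) \<or> (A - \<eta> < p i \<and> (\<forall>t\<ge>T'. U i t = p i))"
    if "i \<in> C" for i
  proof -
    from K that have "(\<forall>t\<ge>tL i (K i). U i t \<le> A - \<eta>) \<or>
        (A - \<eta> < p i \<and> (\<forall>t\<ge>tL i (K i). U i t = p i))"
      unfolding p_def by blast
    with T'[OF that] show ?thesis by fastforce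
  qed
  ultimately show ?thesis by blast
qed

text \<open>If some robot were frozen above A - \<eta>, the topmost frozen robot would see all correct
  robots at or below itself at its next Look and therefore move down.\<close>
lemma eventually_below_top_threshold: "\<exists>T'. \<forall>t\<ge>T'. \<forall>j\<in>C. U j t \<le> A - \<eta>"
proof -
  obtain T' p where "T \<le> T'" and settled:
    "\<forall>i\<in>C. (\<forall>t\<ge>T'. U i t \<le> A - \<eta>) \<or> (A - \<eta> < p i \<and> (\<forall>t\<ge>T'. U i t = p i))"
    using robots_settle by blast
  define high where "high = {i\<in>C. \<not> (\<forall>t\<ge>T'. U i t \<le> A - \<eta>)}"
  have frozen: "A - \<eta> < p i \<and> (\<forall>t\<ge>T'. U i t = p i)" if "i \<in> high" for i
    using that settled unfolding high_def by blast
  have "high = {}"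
  proof (rule ccontr)
    assume "high \<noteq> {}"
    have "finite high" using finite_correct by (simp add: high_def)
    with \<open>high \<noteq> {}\<close> have "Max (p ` high) \<in> p ` high" by (intro Max_in) auto
    then obtain i0 where i0: "i0 \<in> high" "p i0 = Max (p ` high)" by auto
    have top: "p j \<le> p i0" if "j \<in> high" for j
      using i0(2) that \<open>finite high\<close> by simp
    have i0_C: "i0 \<in> C" using i0(1) by (simp add: high_def)
    obtain k where k: "T' < tL i0 k" using tL_unbounded[OF i0_C] by blast
    have "tL i0 k \<le> tL i0 (Suc k)" using tL_mono[OF i0_C, of k "Suc k"] by simp
    with k have look_k: "look_pos i0 k = p i0" and look_Suc: "look_pos i0 (Suc k) = p i0"
      using frozen[OF i0(1)] by auto
    have T_k: "T \<le> tL i0 k" using \<open>T \<le> T'\<close> k by simp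
    have "U j (tL i0 k) \<le> look_pos i0 k" if "j \<in> C" for j
    proof (cases "j \<in> high")
      case True
      then have "U j (tL i0 k) = p j" using frozen k by force
      then show ?thesis using top[OF True] look_k by simp
    next
      case False
      then have "U j (tL i0 k) \<le> A - \<eta>" using that k unfolding high_def by force
      then show ?thesis using frozen[OF i0(1)] look_k by simp
    qed
    moreover have "A - \<xi> \<le> look_pos i0 k" using frozen[OF i0(1)] look_k \<xi>_ge \<eta>_pos by simp
    ultimately have "look_target i0 k < look_pos i0 k"
      using topmost_target_lt_if_few_above[where U=U and t="tL i0 k" and z="A - \<xi>", OF i0_C]
        few_near_top T_k by blast
    then have "look_pos i0 (Suc k) \<le> A - \<eta>" by (rule downward_move_ends_low[OF i0_C T_k])
    with look_Suc frozen[OF i0(1)] show False by simp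
  qed
  then show ?thesis unfolding high_def by blast
qed

end

lemma near_top_recurs:
  assumes "0 < \<eta>" "5 * \<eta> \<le> \<xi>" "\<forall>i\<in>C. 2 * \<eta> \<le> \<delta> i" "\<forall>t\<ge>T. \<forall>j\<in>C. U j t \<le> A + \<eta>"
    and "\<forall>t. \<exists>s\<ge>t. \<exists>j\<in>C. A - \<eta> < U j s"
  shows "\<exists>t\<ge>T. card C - 2*f \<le> card {j\<in>C. A - \<xi> \<le> U j t}"
proof (rule ccontr)
  assume "\<not> ?thesis"
  then have "\<forall>t\<ge>T. card {j\<in>C. A - \<xi> \<le> U j t} < card C - 2*f" using not_le by blast
  then obtain T' where T': "\<forall>t\<ge>T'. \<forall>j\<in>C. U j t \<le> A - \<eta>"
    using eventually_below_top_threshold[OF assms(1-4)] by blast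
  obtain s j where "T' \<le> s" "j \<in> C" "A - \<eta> < U j s" using assms(5) by blast
  with T' show False by force
qed

lemma near_bottom_recurs:
  assumes "0 < \<eta>" "5 * \<eta> \<le> \<xi>" "\<forall>i\<in>C. 2 * \<eta> \<le> \<delta> i" "\<forall>t\<ge>T. \<forall>j\<in>C. a - \<eta> \<le> U j t"
    and "\<forall>t. \<exists>s\<ge>t. \<exists>j\<in>C. U j s < a + \<eta>"
  shows "\<exists>t\<ge>T. card C - 2*f \<le> card {j\<in>C. U j t \<le> a + \<xi>}"
proof -
  have "\<exists>t\<ge>T. card C - 2*f \<le> card {j\<in>C. - a - \<xi> \<le> - U j t}"
    using assms(4,5)
    by (intro corda_execution.near_top_recurs[OF corda_execution_uminus assms(1-3)]) force+
  moreover have "{j\<in>C. - a - \<xi> \<le> - U j t} = {j\<in>C. U j t \<le> a + \<xi>}" for t by auto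
  ultimately show ?thesis by simp
qed

lemma looks_in_window: "\<exists>T'\<ge>T. \<forall>i\<in>C. \<exists>K. T \<le> tL i K \<and> tL i K \<le> T'"
proof -
  have "\<exists>K. T \<le> tL i K" if "i \<in> C" for i
    using tL_unbounded[OF that, of T] less_imp_le by blast
  from bchoice[OF ballI[OF this]] obtain K where K: "\<forall>i\<in>C. T \<le> tL i (K i)" ..
  define T' where "T' = Max ((\<lambda>i. tL i (K i)) ` C)"
  have "tL i (K i) \<le> T'" if "i \<in> C" for i
    unfolding T'_def using finite_correct that by simp
  moreover obtain i0 where "i0 \<in> C" using correct_nonempty by blast
  ultimately show ?thesis using K by (meson order_trans)
qed

text \<open>As long as r does not move down from a position at most m, each of its downward moves
  stops above the midpoint of m and the lower bound b, so r can never get below that midpoint.\<close>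
lemma downward_look_below_if_descends:
  assumes "r \<in> C" and lower: "\<forall>t\<ge>T. \<forall>j\<in>C. b \<le> U j t" and "b \<le> m"
    and "T \<le> tL r K" "tL r K \<le> \<tau>" "\<tau> \<le> \<tau>'"
    and "m < U r \<tau>" "U r \<tau>' < (m + b) / 2"
  shows "\<exists>k. T \<le> tL r k \<and> look_pos r k \<le> m \<and> look_target r k < look_pos r k"
proof (rule ccontr)
  define g where "g = (m + b) / 2"
  assume "\<not> ?thesis"
  then have no_low_descent: "m < look_pos r k" if "T \<le> tL r k" "look_target r k < look_pos r k" for k
    using that by force
  have target_ge: "g \<le> look_target r k" if "T \<le> tL r k" "g \<le> look_pos r k" for k
  proof (cases "look_target r k < look_pos r k")
    case True
    have "(look_pos r k + b) / 2 \<le> look_target r k"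
      using target_ge_midpoint[OF assms(1)] lower that(1) by auto
    with no_low_descent[OF that(1) True] show ?thesis unfolding g_def by argo
  qed (use that(2) in simp)
  obtain k0 where k0: "K \<le> k0" "tL r k0 \<le> \<tau>" "\<tau> < tL r (Suc k0)"
    using cycle_containing[OF assms(1,5)] by blast
  have T_k0: "T \<le> tL r k0" using tL_mono[OF assms(1) k0(1)] assms(4) by linarith
  have in_cycle: "g \<le> U r t" if "\<tau> \<le> t" "t \<le> tL r (Suc k0)" for t
  proof -
    have "g < U r \<tau>" using assms(3,7) unfolding g_def by argo
    have "between (look_pos r k0) (look_target r k0) (U r \<tau>)"
      using between_look_in_cycle[OF assms(1) k0(2)] k0(3) by simp
    then have "g \<le> look_target r k0"
      using target_ge[OF T_k0] \<open>g < U r \<tau>\<close> by (force simp: between_def)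
    moreover have "between (U r \<tau>) (look_target r k0) (U r t)"
      using between_in_cycle[OF assms(1) k0(2) that] .
    ultimately show ?thesis using \<open>g < U r \<tau>\<close> by (auto simp: between_def)
  qed
  have "g \<le> U r \<tau>'"
  proof (cases "\<tau>' \<le> tL r (Suc k0)")
    case False
    have "T \<le> tL r (Suc k0)" using T_k0 tL_mono[OF assms(1), of k0 "Suc k0"] by simp
    have "g \<le> look_pos r (Suc k0)" using in_cycle k0(3) by simp
    then show ?thesis
    proof (rule position_ge_after_look[OF assms(1)])
      show "tL r (Suc k0) \<le> \<tau>'" using False by simp
      fix k assume "tL r (Suc k0) \<le> tL r k" "g \<le> look_pos r k"
      with \<open>T \<le> tL r (Suc k0)\<close> show "g \<le> look_target r k" by (intro target_ge) simp_all
    qed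
  qed (use in_cycle assms(6) in simp)
  with assms(8) show False unfolding g_def by simp
qed

lemma position_le_midpoint_in_cycle:
  assumes upper: "\<forall>t\<ge>T. \<forall>j\<in>C. U j t \<le> M"
    and "j \<in> C" "T \<le> tL j k" "tL j k \<le> \<sigma>" "\<sigma> \<le> t" "t \<le> tL j (Suc k)" "U j \<sigma> \<le> m" "m \<le> M"
  shows "U j t \<le> (m + M) / 2"
proof -
  have b0: "between (look_pos j k) (look_target j k) (U j \<sigma>)"
    using between_look_in_cycle[OF assms(2,4)] assms(5,6) by simp
  have b1: "between (U j \<sigma>) (look_target j k) (U j t)"
    using between_in_cycle[OF assms(2,4-6)] .
  have target_le: "look_target j k \<le> (look_pos j k + M) / 2"
    using target_le_midpoint[OF assms(2)] upper assms(3) by auto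
  show ?thesis
  proof (cases "look_pos j k \<le> look_target j k")
    case True
    then have "look_pos j k \<le> U j \<sigma>" using b0 by (auto simp: between_def)
    with target_le assms(7) have "look_target j k \<le> (m + M) / 2" by argo
    then show ?thesis using b1 assms(7,8) by (auto simp: between_def)
  next
    case False
    then have "look_target j k \<le> U j \<sigma>" using b0 by (auto simp: between_def)
    then show ?thesis using b1 assms(7,8) by (auto simp: between_def)
  qed
qed

text \<open>The robots at or below m at that Look stay below y = (m + M) / 2: during the cycle in
  progress their targets are at most y, and later, while these |C| - f robots are at most y,
  so are their targets.\<close>
lemma trapped_below_after_downward_look:
  assumes upper: "\<forall>t\<ge>T. \<forall>j\<in>C. U j t \<le> M"
    and window: "\<forall>i\<in>C. \<exists>K. T \<le> tL i K \<and> tL i K \<le> T'"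
    and r: "r \<in> C" "T' \<le> tL r k" "look_pos r k \<le> m" "look_target r k < look_pos r k"
    and "m \<le> M"
  shows "\<exists>S\<subseteq>C. card C - f \<le> card S \<and> (\<forall>j\<in>S. \<forall>t\<ge>tL r k. U j t \<le> (m + M) / 2)"
proof -
  define \<sigma> where "\<sigma> = tL r k"
  define S where "S = {j\<in>C. U j \<sigma> \<le> m}"
  have "card C - f \<le> card {j\<in>C. U j \<sigma> \<le> look_pos r k}"
    unfolding \<sigma>_def by (rule card_below_if_target_lt[OF r(1,4)])
  moreover have "card {j\<in>C. U j \<sigma> \<le> look_pos r k} \<le> card S"
    unfolding S_def using finite_correct r(3) by (intro card_mono) auto
  ultimately have card_S: "card C - f \<le> card S" by linarith
  have "\<forall>j\<in>S. \<forall>t\<ge>\<sigma>. U j t \<le> (m + M) / 2"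
  proof (rule stays_below)
    fix j t assume "j \<in> S" "\<sigma> \<le> t" and no_look: "\<forall>k. tL j k < t \<longrightarrow> tL j k < \<sigma>"
    then have j: "j \<in> C" "U j \<sigma> \<le> m" by (auto simp: S_def)
    obtain Kj where Kj: "T \<le> tL j Kj" "tL j Kj \<le> T'" using window j(1) by blast
    then have "tL j Kj \<le> \<sigma>" using r(2) unfolding \<sigma>_def by linarith
    then obtain k' where k': "Kj \<le> k'" "tL j k' \<le> \<sigma>" "\<sigma> < tL j (Suc k')"
      using cycle_containing[OF j(1)] by blast
    have "t \<le> tL j (Suc k')" using no_look k'(3) by (cases "tL j (Suc k') < t") auto
    moreover have "T \<le> tL j k'" using tL_mono[OF j(1) k'(1)] Kj(1) by linarith
    ultimately show "U j t \<le> (m + M) / 2"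
      using position_le_midpoint_in_cycle[OF upper j(1) _ k'(2) \<open>\<sigma> \<le> t\<close> _ j(2) \<open>m \<le> M\<close>] by blast
  next
    fix i k' assume "i \<in> S" and all_le: "\<forall>j\<in>S. U j (tL i k') \<le> (m + M) / 2"
    then have "card S \<le> card {j\<in>C. U j (tL i k') \<le> (m + M) / 2}"
      using finite_correct by (intro card_mono) (auto simp: S_def)
    with card_S all_le \<open>i \<in> S\<close> show "look_target i k' \<le> (m + M) / 2"
      by (intro target_le_if_many_below) (auto simp: S_def)
  qed (auto simp: S_def)
  with card_S show ?thesis unfolding \<sigma>_def by (intro exI[of _ S]) (auto simp: S_def)
qed

lemma small_step_bound: "0 < \<epsilon> \<Longrightarrow> \<exists>\<eta>. 0 < \<eta> \<and> \<eta> \<le> \<epsilon> \<and> (\<forall>i\<in>C. 2 * \<eta> \<le> \<delta> i)"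
proof (intro exI conjI ballI)
  fix i assume "i \<in> C"
  with finite_correct have "Min (\<delta> ` C) \<le> \<delta> i" by simp
  then show "2 * min (Min (\<delta> ` C) / 2) \<epsilon> \<le> \<delta> i" by linarith
next
  show "0 < \<epsilon> \<Longrightarrow> 0 < min (Min (\<delta> ` C) / 2) \<epsilon>"
    using finite_correct correct_nonempty delta_pos by simp
qed simp

lemma limsup_le_liminf:
  assumes "4 * f < card C"
    and A: "\<forall>\<eta>>0. \<exists>T. \<forall>t\<ge>T. \<forall>j\<in>C. U j t \<le> A + \<eta>" "\<forall>\<theta>>0. \<forall>t. \<exists>s\<ge>t. \<exists>j\<in>C. A - \<theta> < U j s"
    and a: "\<forall>\<eta>>0. \<exists>T. \<forall>t\<ge>T. \<forall>j\<in>C. a - \<eta> \<le> U j t" "\<forall>\<theta>>0. \<forall>t. \<exists>s\<ge>t. \<exists>j\<in>C. U j s < a + \<theta>"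
  shows "A \<le> a"
proof (rule ccontr)
  assume "\<not> A \<le> a"
  define w where "w = A - a"
  define \<xi> where "\<xi> = w / 8"
  define mid where "mid = (a + A) / 2"
  have w: "0 < w" using \<open>\<not> A \<le> a\<close> unfolding w_def by simp
  then obtain \<eta> where \<eta>: "0 < \<eta>" "40 * \<eta> \<le> w" and \<delta>: "\<forall>i\<in>C. 2 * \<eta> \<le> \<delta> i"
    using small_step_bound[of "w / 40"] by auto
  then have \<xi>: "5 * \<eta> \<le> \<xi>" unfolding \<xi>_def by simp
  obtain T where T: "\<forall>t\<ge>T. \<forall>j\<in>C. a - \<eta> \<le> U j t \<and> U j t \<le> A + \<eta>"
    using A(1) a(1) \<eta>(1) by (metis max.bounded_iff nle_le)
  obtain T' where T': "T \<le> T'" "\<forall>i\<in>C. \<exists>K. T \<le> tL i K \<and> tL i K \<le> T'"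
    using looks_in_window by blast
  obtain T'' where T'': "T' \<le> T''" "\<forall>i\<in>C. \<exists>K. T' \<le> tL i K \<and> tL i K \<le> T''"
    using looks_in_window by blast
  have near_top: "\<exists>t\<ge>t0. card C - 2*f \<le> card {j\<in>C. A - \<xi> \<le> U j t}" if "T \<le> t0" for t0
    using that T A(2) \<eta>(1) by (intro near_top_recurs[OF \<eta>(1) \<xi> \<delta>]) auto
  obtain \<tau>1 where \<tau>1: "T'' \<le> \<tau>1" "card C - 2*f \<le> card {j\<in>C. A - \<xi> \<le> U j \<tau>1}"
    using near_top T'(1) T''(1) by (meson order_trans)
  have "\<exists>\<tau>2\<ge>\<tau>1. card C - 2*f \<le> card {j\<in>C. U j \<tau>2 \<le> a + \<xi>}"
    using T T'(1) T''(1) \<tau>1(1) a(2) \<eta>(1) by (intro near_bottom_recurs[OF \<eta>(1) \<xi> \<delta>]) auto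
  then obtain \<tau>2 where \<tau>2: "\<tau>1 \<le> \<tau>2" "card C - 2*f \<le> card {j\<in>C. U j \<tau>2 \<le> a + \<xi>}"
    by blast
  have "{j\<in>C. A - \<xi> \<le> U j \<tau>1} \<inter> {j\<in>C. U j \<tau>2 \<le> a + \<xi>} \<noteq> {}"
    using \<tau>1(2) \<tau>2(2) assms(1) finite_correct by (intro intersect_if_card_sum_gt) auto
  then obtain r where r: "r \<in> C" "A - \<xi> \<le> U r \<tau>1" "U r \<tau>2 \<le> a + \<xi>" by auto
  obtain K where K: "T' \<le> tL r K" "tL r K \<le> T''" using T''(2) r(1) by blast
  have lower: "\<forall>t\<ge>T'. \<forall>j\<in>C. a - \<eta> \<le> U j t" using T T'(1) by force
  have upper: "\<forall>t\<ge>T. \<forall>j\<in>C. U j t \<le> A + \<eta>" using T by blast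
  have "mid < U r \<tau>1" "U r \<tau>2 < (mid + (a - \<eta>)) / 2" "a - \<eta> \<le> mid" "mid \<le> A + \<eta>"
    using r \<eta> w unfolding mid_def \<xi>_def w_def by argo+
  moreover have "tL r K \<le> \<tau>1" using K(2) \<tau>1(1) by simp
  ultimately obtain k where k: "T' \<le> tL r k" "look_pos r k \<le> mid" "look_target r k < look_pos r k"
    using downward_look_below_if_descends[OF r(1) lower _ K(1) _ \<tau>2(1)] by blast
  obtain S where S: "S \<subseteq> C" "card C - f \<le> card S"
      "\<forall>j\<in>S. \<forall>t\<ge>tL r k. U j t \<le> (mid + (A + \<eta>)) / 2"
    using trapped_below_after_downward_look[OF upper T'(2) r(1) k \<open>mid \<le> A + \<eta>\<close>] by blast
  have "T \<le> tL r k" using T'(1) k(1) by simp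
  then obtain \<tau>3 where \<tau>3: "tL r k \<le> \<tau>3" "card C - 2*f \<le> card {j\<in>C. A - \<xi> \<le> U j \<tau>3}"
    using near_top by blast
  have "(mid + (A + \<eta>)) / 2 < A - \<xi>" using \<eta> w unfolding mid_def \<xi>_def w_def by argo
  then have "S \<inter> {j\<in>C. A - \<xi> \<le> U j \<tau>3} = {}" using S(3) \<tau>3(1) by fastforce
  moreover have "S \<inter> {j\<in>C. A - \<xi> \<le> U j \<tau>3} \<noteq> {}"
    using S(1,2) \<tau>3(2) assms(1) finite_correct by (intro intersect_if_card_sum_gt) auto
  ultimately show False by contradiction
qed

lemma correct_robots_converge:
  assumes "4 * f < card C"
  shows "\<forall>\<epsilon>>0. \<exists>t\<^sub>\<epsilon>. \<forall>t>t\<^sub>\<epsilon>. \<forall>i\<in>C. \<forall>j\<in>C. \<bar>U i t - U j t\<bar> < \<epsilon>"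
proof (intro allI impI)
  fix \<epsilon> :: real assume "0 < \<epsilon>"
  obtain A where A: "\<forall>\<eta>>0. \<exists>T. \<forall>t\<ge>T. \<forall>j\<in>C. U j t \<le> A + \<eta>"
      "\<forall>\<theta>>0. \<forall>t. \<exists>s\<ge>t. \<exists>j\<in>C. A - \<theta> < U j s"
    using limsup_positions by blast
  obtain a where a: "\<forall>\<eta>>0. \<exists>T. \<forall>t\<ge>T. \<forall>j\<in>C. a - \<eta> \<le> U j t"
      "\<forall>\<theta>>0. \<forall>t. \<exists>s\<ge>t. \<exists>j\<in>C. U j s < a + \<theta>"
    using liminf_positions by blast
  have "A \<le> a" by (rule limsup_le_liminf[OF assms A a])
  have "0 < \<epsilon> / 3" using \<open>0 < \<epsilon>\<close> by simp
  then obtain T1 T2 where T1: "\<forall>t\<ge>T1. \<forall>j\<in>C. U j t \<le> A + \<epsilon> / 3"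
      and T2: "\<forall>t\<ge>T2. \<forall>j\<in>C. a - \<epsilon> / 3 \<le> U j t"
    using A(1) a(1) by blast
  show "\<exists>t\<^sub>\<epsilon>. \<forall>t>t\<^sub>\<epsilon>. \<forall>i\<in>C. \<forall>j\<in>C. \<bar>U i t - U j t\<bar> < \<epsilon>"
  proof (intro exI[of _ "max T1 T2"] allI impI ballI)
    fix t i j assume "max T1 T2 < t" "i \<in> C" "j \<in> C"
    moreover have "T1 \<le> t" "T2 \<le> t" using \<open>max T1 T2 < t\<close> by simp_all
    ultimately have "U i t \<le> A + \<epsilon> / 3" "a - \<epsilon> / 3 \<le> U i t" "U j t \<le> A + \<epsilon> / 3" "a - \<epsilon> / 3 \<le> U j t"
      using T1 T2 by blast+
    with \<open>A \<le> a\<close> \<open>0 < \<epsilon>\<close> show "\<bar>U i t - U j t\<bar> < \<epsilon>" unfolding abs_less_iff by linarith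
  qed
qed

end

theorem mainTheorem1:
  fixes n f :: nat
    and C :: "nat set"
    and U :: "nat \<Rightarrow> real \<Rightarrow> real"
    and \<delta> :: "nat \<Rightarrow> real"
    and tL tMs tMe :: "nat \<Rightarrow> nat \<Rightarrow> real"
  assumes "f \<ge> 1"
    and "n \<ge> 5 * f + 1"
    and "C \<subseteq> {..<n}"
    and "card C \<ge> n - f"
    and "\<forall>i\<in>C. correct_robot n f U i (\<delta> i) (tL i) (tMs i) (tMe i)"
  shows "\<forall>\<epsilon>>0. \<exists>t\<^sub>\<epsilon>. \<forall>t>t\<^sub>\<epsilon>. \<forall>i\<in>C. \<forall>j\<in>C. \<bar>U i t - U j t\<bar> < \<epsilon>"
proof -
  interpret corda_execution n f C U \<delta> tL tMs tMe
    by unfold_locales (use assms(2-5) in auto)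
  have "4 * f < card C" using assms(2,4) by linarith
  then show ?thesis by (rule correct_robots_converge)
qed

end
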